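(* Let $-\infty<a<b<+\infty$, $m\ge0$, let $D^{max}\phi=-i\sigma_1\phi'+m\sigma_3\phi$ on $H^1((a,b);\mathbb C^2)$, let $\Gamma^1\phi=(\phi^1(a),\phi^1(b))^T$, $\Gamma^2\phi=(i\phi^2(a),-i\phi^2(b))^T$, so that $(\Gamma^1,\Gamma^2,\mathbb C^2)$ is a boundary triple for $D^{max}$, and let $D^0=D^{max}\upharpoonright\ker\Gamma^1$. Then: (i) for $z\in\rho(D^0)$ the induced Krein $\gamma$-field is $\gamma(z):\mathbb C^2\to L^2((a,b);\mathbb C^2)$, $\gamma(z)(\omega^1,\omega^2)^T=\omega^1\eta_{z,1}+\omega^2\eta_{z,2}$; (ii) for $z\in\rho(D^0)$, $\gamma(z)^*\phi=\big(\langle\eta_{z,1}|\phi\rangle,\ \langle\eta_{z,2}|\phi\rangle\big)^T$ for all $\phi\in L^2((a,b);\mathbb C^2)$; (iii) the induced Krein $Q$-function satisfies, for $z\in\rho(D^0)\setminus\{m\}$, $$Q(z)=\frac{-1}{\alpha(z)\sin(k(z)(b-a))}\begin{pmatrix}\cos(k(z)(b-a))&-1\\-1&\cos(k(z)(b-a))\end{pmatrix},$$ and at $z=m$ (when $m\in\rho(D^0)$) $$Q(m)=\frac{-1}{2m(b-a)}\begin{pmatrix}1&-1\\-1&1\end{pmatrix}.$$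
   Context: $\sigma_1=\begin{pmatrix}0&1\\1&0\end{pmatrix}$, $\sigma_3=\operatorname{diag}(1,-1)$, $\phi=(\phi^1,\phi^2)^T$; inner products are antilinear in the first argument. For $z\in\rho(D^0)$, $\gamma(z)=(\Gamma^1\upharpoonright\ker(D^{max}-z))^{-1}$ and $Q(z)=\Gamma^2\gamma(z)$. $k(z)=\sqrt{z^2-m^2}$ with $\arg k(z)\in[0,\pi)$; for $z\ne\pm m$, $\alpha(z)=\frac{z+m}{k(z)}$. For $z\in\rho(D^0)\setminus\{m\}$ (where $\alpha(z)\sin(k(z)(b-a))\ne0$), $\eta_{z,1}(x)=\frac{1}{\sin(k(z)(b-a))}\big(\sin(k(z)(b-x)),\ \frac{i}{\alpha(z)}\cos(k(z)(b-x))\big)^T$, $\eta_{z,2}(x)=\frac{1}{\sin(k(z)(b-a))}\big(\sin(k(z)(x-a)),\ \frac{-i}{\alpha(z)}\cos(k(z)(x-a))\big)^T$; for $m\ne0$, $\eta_{m,1}(x)=\frac{1}{b-a}\big(b-x,\frac{i}{2m}\big)^T$, $\eta_{m,2}(x)=\frac{1}{b-a}\big(x-a,\frac{-i}{2m}\big)^T$. *)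

theory Defs
  imports "HOL-Analysis.Analysis"
begin

text \<open>C^2-valued functions on [a,b] are modelled as functions real => complex * complex;
  only their values on [a,b] matter.\<close>

type_synonym cfun2 = "real \<Rightarrow> complex \<times> complex"

definition L2fun :: "real \<Rightarrow> real \<Rightarrow> (real \<Rightarrow> complex) \<Rightarrow> bool" where
  "L2fun a b g \<longleftrightarrow> set_borel_measurable lborel {a..b} g \<and>
     set_integrable lborel {a..b} (\<lambda>x. (cmod (g x))\<^sup>2)"

definition L2vec :: "real \<Rightarrow> real \<Rightarrow> cfun2 \<Rightarrow> bool" where
  "L2vec a b \<phi> \<longleftrightarrow> L2fun a b (\<lambda>x. fst (\<phi> x)) \<and> L2fun a b (\<lambda>x. snd (\<phi> x))"

definition L2inner :: "real \<Rightarrow> real \<Rightarrow> cfun2 \<Rightarrow> cfun2 \<Rightarrow> complex" where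
  "L2inner a b \<phi> \<psi> = set_lebesgue_integral lborel {a..b}
     (\<lambda>x. cnj (fst (\<phi> x)) * fst (\<psi> x) + cnj (snd (\<phi> x)) * snd (\<psi> x))"

definition L2norm :: "real \<Rightarrow> real \<Rightarrow> cfun2 \<Rightarrow> real" where
  "L2norm a b \<phi> = sqrt (Re (L2inner a b \<phi> \<phi>))"

definition C2inner :: "complex \<times> complex \<Rightarrow> complex \<times> complex \<Rightarrow> complex" where
  "C2inner v w = cnj (fst v) * fst w + cnj (snd v) * snd w"

text \<open>H^1((a,b)) via the absolutely continuous representative:
  g is the (weak) derivative of f, with g in L^2, and f x = f a + int_a^x g on [a,b].\<close>
definition weak_deriv :: "real \<Rightarrow> real \<Rightarrow> (real \<Rightarrow> complex) \<Rightarrow> (real \<Rightarrow> complex) \<Rightarrow> bool" where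
  "weak_deriv a b f g \<longleftrightarrow> L2fun a b g \<and>
     (\<forall>x\<in>{a..b}. f x = f a + set_lebesgue_integral lborel {a..x} g)"

definition H1 :: "real \<Rightarrow> real \<Rightarrow> (real \<Rightarrow> complex) \<Rightarrow> bool" where
  "H1 a b f \<longleftrightarrow> (\<exists>g. weak_deriv a b f g)"

text \<open>Graph of D^max: \<phi> \<in> H^1((a,b);C^2) and D^max \<phi> = \<psi> in L^2 (a.e. on (a,b)),
  where D^max \<phi> = -i \<sigma>_1 \<phi>' + m \<sigma>_3 \<phi>.\<close>
definition Dmax_rel :: "real \<Rightarrow> real \<Rightarrow> real \<Rightarrow> cfun2 \<Rightarrow> cfun2 \<Rightarrow> bool" where
  "Dmax_rel a b m \<phi> \<psi> \<longleftrightarrow> L2vec a b \<psi> \<and> (\<exists>g1 g2.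
     weak_deriv a b (\<lambda>x. fst (\<phi> x)) g1 \<and> weak_deriv a b (\<lambda>x. snd (\<phi> x)) g2 \<and>
     (AE x in lborel. x \<in> {a..b} \<longrightarrow>
        \<psi> x = (- \<i> * g2 x + of_real m * fst (\<phi> x), - \<i> * g1 x - of_real m * snd (\<phi> x))))"

definition Gamma1 :: "real \<Rightarrow> real \<Rightarrow> cfun2 \<Rightarrow> complex \<times> complex" where
  "Gamma1 a b \<phi> = (fst (\<phi> a), fst (\<phi> b))"

definition Gamma2 :: "real \<Rightarrow> real \<Rightarrow> cfun2 \<Rightarrow> complex \<times> complex" where
  "Gamma2 a b \<phi> = (\<i> * snd (\<phi> a), - \<i> * snd (\<phi> b))"

definition D0_rel :: "real \<Rightarrow> real \<Rightarrow> real \<Rightarrow> cfun2 \<Rightarrow> cfun2 \<Rightarrow> bool" where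
  "D0_rel a b m \<phi> \<psi> \<longleftrightarrow> Dmax_rel a b m \<phi> \<psi> \<and> Gamma1 a b \<phi> = (0, 0)"

definition cscale :: "complex \<Rightarrow> cfun2 \<Rightarrow> cfun2" where
  "cscale z \<phi> = (\<lambda>x. (z * fst (\<phi> x), z * snd (\<phi> x)))"

definition cdiff :: "cfun2 \<Rightarrow> cfun2 \<Rightarrow> cfun2" where
  "cdiff \<phi> \<psi> = (\<lambda>x. (fst (\<phi> x) - fst (\<psi> x), snd (\<phi> x) - snd (\<psi> x)))"

definition resolvent_D0 :: "real \<Rightarrow> real \<Rightarrow> real \<Rightarrow> complex set" where
  "resolvent_D0 a b m = {z.
     (\<forall>\<psi>. L2vec a b \<psi> \<longrightarrow> (\<exists>\<phi> \<theta>. D0_rel a b m \<phi> \<theta> \<and>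
          (AE x in lborel. x \<in> {a..b} \<longrightarrow> cdiff \<theta> (cscale z \<phi>) x = \<psi> x))) \<and>
     (\<exists>C. \<forall>\<phi> \<theta>. D0_rel a b m \<phi> \<theta> \<longrightarrow>
          L2norm a b \<phi> \<le> C * L2norm a b (cdiff \<theta> (cscale z \<phi>)))}"

text \<open>Krein \<gamma>-field: inverse of \<Gamma>^1 restricted to ker(D^max - z).\<close>
definition gamma_field :: "real \<Rightarrow> real \<Rightarrow> real \<Rightarrow> complex \<Rightarrow> complex \<times> complex \<Rightarrow> cfun2" where
  "gamma_field a b m z \<omega> = (SOME \<phi>. Dmax_rel a b m \<phi> (cscale z \<phi>) \<and> Gamma1 a b \<phi> = \<omega>)"

definition gamma_adj :: "real \<Rightarrow> real \<Rightarrow> real \<Rightarrow> complex \<Rightarrow> cfun2 \<Rightarrow> complex \<times> complex" where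
  "gamma_adj a b m z \<phi> = (SOME v. \<forall>\<omega>. C2inner v \<omega> = L2inner a b \<phi> (gamma_field a b m z \<omega>))"

definition Qfun :: "real \<Rightarrow> real \<Rightarrow> real \<Rightarrow> complex \<Rightarrow> complex \<times> complex \<Rightarrow> complex \<times> complex" where
  "Qfun a b m z \<omega> = Gamma2 a b (gamma_field a b m z \<omega>)"

text \<open>k(z) = sqrt(z^2 - m^2) with arg in [0,pi) (Arg 0 = 0 in Isabelle).\<close>
definition kfun :: "real \<Rightarrow> complex \<Rightarrow> complex" where
  "kfun m z = (THE w. w\<^sup>2 = z\<^sup>2 - (of_real m)\<^sup>2 \<and> 0 \<le> Arg w \<and> Arg w < pi)"

definition alpha :: "real \<Rightarrow> complex \<Rightarrow> complex" where
  "alpha m z = (z + of_real m) / kfun m z"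

definition eta1 :: "real \<Rightarrow> real \<Rightarrow> real \<Rightarrow> complex \<Rightarrow> cfun2" where
  "eta1 a b m z = (if z = of_real m then
     (\<lambda>x. (of_real ((b - x) / (b - a)), \<i> / (2 * of_real m) / of_real (b - a)))
   else
     (\<lambda>x. (sin (kfun m z * of_real (b - x)) / sin (kfun m z * of_real (b - a)),
           (\<i> / alpha m z) * cos (kfun m z * of_real (b - x)) / sin (kfun m z * of_real (b - a)))))"

definition eta2 :: "real \<Rightarrow> real \<Rightarrow> real \<Rightarrow> complex \<Rightarrow> cfun2" where
  "eta2 a b m z = (if z = of_real m then
     (\<lambda>x. (of_real ((x - a) / (b - a)), - \<i> / (2 * of_real m) / of_real (b - a)))
   else
     (\<lambda>x. (sin (kfun m z * of_real (x - a)) / sin (kfun m z * of_real (b - a)),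
           (- \<i> / alpha m z) * cos (kfun m z * of_real (x - a)) / sin (kfun m z * of_real (b - a)))))"

end

theory Submission
  imports Defs
begin

text \<open>
  \<open>\<gamma>(z) \<omega>\<close> is a solution of \<open>D\<^sup>max \<phi> = z \<phi>\<close> with \<open>\<Gamma>\<^sup>1 \<phi> = \<omega>\<close>, and such a solution is unique
  because the resolvent estimate makes \<open>D\<^sup>0 - z\<close> injective and the difference of two solutions
  lies in \<open>ker (D\<^sup>0 - z)\<close>. So it suffices to check that \<open>\<omega>\<^sub>1 \<eta>\<^sub>z\<^sub>,\<^sub>1 + \<omega>\<^sub>2 \<eta>\<^sub>z\<^sub>,\<^sub>2\<close> solves the
  differential equation and has the right boundary values: for \<open>z \<noteq> \<plusminus>m\<close> the solutions are
  combinations of \<open>sin (k(z) (b - x))\<close> and \<open>sin (k(z) (x - a))\<close>, for \<open>z = m\<close> they are affine.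
  The same injectivity shows that a point \<open>z\<close> of \<open>\<rho>(D\<^sup>0)\<close> is never \<open>-m\<close> (the constant
  \<open>(0, 1)\<close> lies in \<open>ker (D\<^sup>0 + m)\<close>; this also rules out \<open>z = m = 0\<close>) and satisfies
  \<open>sin (k(z) (b - a)) \<noteq> 0\<close>, so the \<open>\<eta>\<close>'s are well defined.
  The formulas for \<open>\<gamma>(z)\<^sup>*\<close> and \<open>Q(z)\<close> then follow by integrating against and evaluating
  the \<open>\<eta>\<close>'s at the end points.
\<close>

section \<open>Square-integrable and \<open>H\<^sup>1\<close> functions on a compact interval\<close>

lemma L2fun_continuous_on:
  assumes "continuous_on {a..b} h"
  shows "L2fun a b h"
  unfolding L2fun_def set_borel_measurable_def
proof
  show "(\<lambda>x. indicator {a..b} x *\<^sub>R h x) \<in> borel_measurable lborel"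
    using borel_measurable_continuous_on_indicator[OF _ assms] by simp
  have "continuous_on {a..b} (\<lambda>x. (cmod (h x))\<^sup>2)"
    by (intro continuous_intros assms)
  then show "set_integrable lborel {a..b} (\<lambda>x. (cmod (h x))\<^sup>2)"
    by (rule borel_integrable_atLeastAtMost')
qed

lemma L2fun_imp_set_integrable:
  assumes "L2fun a b g"
  shows "set_integrable lborel {a..b} g"
proof -
  have bound: "set_integrable lborel {a..b} (\<lambda>x. 1 + (cmod (g x))\<^sup>2)"
    using borel_integrable_atLeastAtMost'[of a b "\<lambda>x. 1 :: real"] assms unfolding L2fun_def
    by (auto intro!: set_integral_add(1))
  have le: "t \<le> 1 + t\<^sup>2" for t :: real
    using zero_le_power2[of "t - 1/2"] by (simp add: power2_eq_square algebra_simps)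
  show ?thesis
    by (rule set_integrable_bound[OF bound]) (use assms le in \<open>auto simp: L2fun_def\<close>)
qed

lemma L2fun_diff:
  assumes u: "L2fun a b u" and v: "L2fun a b v"
  shows "L2fun a b (\<lambda>x. u x - v x)"
proof -
  have "(\<lambda>x. indicator {a..b} x *\<^sub>R u x - indicator {a..b} x *\<^sub>R v x) \<in> borel_measurable lborel"
    using u v unfolding L2fun_def set_borel_measurable_def by (intro borel_measurable_diff) auto
  moreover have "(\<lambda>x. indicator {a..b} x *\<^sub>R (u x - v x)) =
      (\<lambda>x. indicator {a..b} x *\<^sub>R u x - indicator {a..b} x *\<^sub>R v x)"
    by (simp add: fun_eq_iff split: split_indicator)
  ultimately have m: "set_borel_measurable lborel {a..b} (\<lambda>x. u x - v x)"
    unfolding set_borel_measurable_def by simp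
  have square_eq: "(\<lambda>x. indicator {a..b} x *\<^sub>R (cmod (u x - v x))\<^sup>2) =
      (\<lambda>x. (cmod (indicator {a..b} x *\<^sub>R (u x - v x)))\<^sup>2)"
    by (simp add: fun_eq_iff split: split_indicator)
  have m2: "set_borel_measurable lborel {a..b} (\<lambda>x. (cmod (u x - v x))\<^sup>2)"
    using m unfolding set_borel_measurable_def square_eq by measurable
  have bound: "set_integrable lborel {a..b} (\<lambda>x. 2 * (cmod (u x))\<^sup>2 + 2 * (cmod (v x))\<^sup>2)"
    using u v unfolding L2fun_def by (intro set_integral_add(1) set_integrable_mult_right) auto
  have le: "(cmod (p - q))\<^sup>2 \<le> 2 * (cmod p)\<^sup>2 + 2 * (cmod q)\<^sup>2" for p q :: complex
  proof -
    have "(cmod (p - q))\<^sup>2 \<le> (cmod p + cmod q)\<^sup>2"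
      by (intro power_mono norm_triangle_ineq4) auto
    also have "\<dots> \<le> 2 * (cmod p)\<^sup>2 + 2 * (cmod q)\<^sup>2"
      using zero_le_power2[of "cmod p - cmod q"] by (simp add: power2_eq_square algebra_simps)
    finally show ?thesis .
  qed
  have "set_integrable lborel {a..b} (\<lambda>x. (cmod (u x - v x))\<^sup>2)"
    by (rule set_integrable_bound[OF bound m2]) (use le in auto)
  then show ?thesis using m unfolding L2fun_def by blast
qed

lemma set_integrable_cnj_mult_continuous_on:
  assumes u: "L2fun a b u" and h: "continuous_on {a..b} h"
  shows "set_integrable lborel {a..b} (\<lambda>x. cnj (u x) * h x)"
proof -
  obtain B where "\<forall>x\<in>{a..b}. norm (h x) \<le> B"
    using compact_imp_bounded[OF compact_continuous_image[OF h compact_Icc]]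
    unfolding bounded_iff by auto
  then have B: "norm (h x) \<le> B" if "x \<in> {a..b}" for x
    using that by blast
  have bound: "set_integrable lborel {a..b} (\<lambda>x. B *\<^sub>R u x)"
    using L2fun_imp_set_integrable[OF u] by (rule set_integrable_scaleR_right)
  have meas: "set_borel_measurable lborel {a..b} (\<lambda>x. cnj (u x) * h x)"
  proof -
    have "(\<lambda>x. cnj (indicator {a..b} x *\<^sub>R u x)) \<in> borel_measurable lborel"
      using u unfolding L2fun_def set_borel_measurable_def
      by (intro borel_measurable_continuous_on[where f = cnj] continuous_intros) auto
    moreover have "(\<lambda>x. indicator {a..b} x *\<^sub>R (cnj (u x) * h x)) =
        (\<lambda>x. cnj (indicator {a..b} x *\<^sub>R u x) * (indicator {a..b} x *\<^sub>R h x))"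
      by (simp add: fun_eq_iff split: split_indicator)
    ultimately show ?thesis
      using borel_measurable_continuous_on_indicator[OF _ h]
      unfolding set_borel_measurable_def by (simp only:) (intro borel_measurable_times; simp)
  qed
  have le: "norm (cnj (u x) * h x) \<le> norm (B *\<^sub>R u x)" if "x \<in> {a..b}" for x
  proof -
    have "0 \<le> B" using B[OF that] norm_ge_zero order_trans by blast
    have "norm (cnj (u x) * h x) = norm (u x) * norm (h x)" by (simp add: norm_mult)
    also have "\<dots> \<le> norm (u x) * B" using B[OF that] by (intro mult_left_mono) auto
    also have "\<dots> = norm (B *\<^sub>R u x)" using \<open>0 \<le> B\<close> by simp
    finally show ?thesis .
  qed
  show ?thesis
    by (rule set_integrable_bound[OF bound meas]) (use le in auto)
qed

lemma weak_deriv_continuous_on: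
  assumes "weak_deriv a b f g"
  shows "continuous_on {a..b} f"
proof -
  have gi: "set_integrable lborel {a..b} g"
    using assms L2fun_imp_set_integrable unfolding weak_deriv_def by blast
  then have "continuous_on {a..b} (\<lambda>x. f a + integral {a..x} g)"
    by (intro continuous_intros indefinite_integral_continuous_1 set_borel_integral_eq_integral(1))
  moreover have "f a + integral {a..x} g = f x" if "x \<in> {a..b}" for x
  proof -
    have "set_integrable lborel {a..x} g"
      by (rule set_integrable_subset[OF gi]) (use that in auto)
    moreover have "f x = f a + set_lebesgue_integral lborel {a..x} g"
      using assms that unfolding weak_deriv_def by blast
    ultimately show ?thesis by (simp add: set_borel_integral_eq_integral(2))
  qed
  ultimately show ?thesis by (rule continuous_on_eq)
qed

lemma weak_deriv_if_has_vector_derivative: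
  fixes f f' :: "real \<Rightarrow> complex"
  assumes d: "\<And>x. (f has_vector_derivative f' x) (at x)"
    and c: "continuous_on {a..b} f'"
  shows "weak_deriv a b f f'"
  unfolding weak_deriv_def
proof (intro conjI ballI)
  show "L2fun a b f'" using c by (rule L2fun_continuous_on)
  fix x assume x: "x \<in> {a..b}"
  have "integral\<^sup>L lborel (\<lambda>t. indicator {a..x} t *\<^sub>R f' t) = f x - f a"
  proof (rule integral_FTC_atLeastAtMost)
    show "continuous_on {a..x} f'"
      using c by (rule continuous_on_subset) (use x in auto)
  qed (use x in \<open>auto intro: has_vector_derivative_at_within d\<close>)
  then show "f x = f a + set_lebesgue_integral lborel {a..x} f'"
    unfolding set_lebesgue_integral_def by simp
qed

lemma weak_deriv_const: "weak_deriv a b (\<lambda>x. c) (\<lambda>x. 0)"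
  by (intro weak_deriv_if_has_vector_derivative has_vector_derivative_const continuous_intros)

lemma weak_deriv_diff:
  assumes 1: "weak_deriv a b f1 g1" and 2: "weak_deriv a b f2 g2"
  shows "weak_deriv a b (\<lambda>x. f1 x - f2 x) (\<lambda>x. g1 x - g2 x)"
  unfolding weak_deriv_def
proof (intro conjI ballI)
  show "L2fun a b (\<lambda>x. g1 x - g2 x)"
    using 1 2 unfolding weak_deriv_def by (intro L2fun_diff) auto
  fix x assume x: "x \<in> {a..b}"
  have "set_integrable lborel {a..x} g" if "L2fun a b g" for g
    by (rule set_integrable_subset[OF L2fun_imp_set_integrable[OF that]]) (use x in auto)
  then have "set_integrable lborel {a..x} g1" "set_integrable lborel {a..x} g2"
    using 1 2 unfolding weak_deriv_def by blast+
  moreover have "f1 x = f1 a + set_lebesgue_integral lborel {a..x} g1"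
    "f2 x = f2 a + set_lebesgue_integral lborel {a..x} g2"
    using 1 2 x unfolding weak_deriv_def by blast+
  ultimately show "f1 x - f2 x = f1 a - f2 a + set_lebesgue_integral lborel {a..x} (\<lambda>x. g1 x - g2 x)"
    by (simp add: set_integral_diff(2))
qed

lemma L2inner_swap: "L2inner a b \<eta> \<phi> = cnj (L2inner a b \<phi> \<eta>)"
proof -
  let ?F = "\<lambda>x. indicator {a..b} x *\<^sub>R (cnj (fst (\<phi> x)) * fst (\<eta> x) + cnj (snd (\<phi> x)) * snd (\<eta> x))"
  have "cnj (integral\<^sup>L lborel ?F) = integral\<^sup>L lborel (\<lambda>x. cnj (?F x))"
    by (rule Bochner_Integration.integral_cnj[symmetric])
  also have "(\<lambda>x. cnj (?F x)) =
      (\<lambda>x. indicator {a..b} x *\<^sub>R (cnj (fst (\<eta> x)) * fst (\<phi> x) + cnj (snd (\<eta> x)) * snd (\<phi> x)))"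
    by (simp add: fun_eq_iff ac_simps split: split_indicator)
  finally show ?thesis unfolding L2inner_def set_lebesgue_integral_def by simp
qed

lemma L2norm_le_0_imp_zero:
  assumes "a < b" and "x \<in> {a..b}" and "L2norm a b \<phi> \<le> 0"
    and "continuous_on {a..b} (\<lambda>x. fst (\<phi> x))" "continuous_on {a..b} (\<lambda>x. snd (\<phi> x))"
  shows "\<phi> x = (0, 0)"
proof -
  define h where "h x = (cmod (fst (\<phi> x)))\<^sup>2 + (cmod (snd (\<phi> x)))\<^sup>2" for x
  have hc: "continuous_on {a..b} h"
    unfolding h_def using assms(4,5) by (intro continuous_on_add continuous_on_power continuous_on_norm)
  have hi: "set_integrable lborel {a..b} h"
    using hc by (rule borel_integrable_atLeastAtMost')
  have h_nonneg: "0 \<le> h x" for x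
    unfolding h_def by simp
  have "(\<lambda>x. cnj (fst (\<phi> x)) * fst (\<phi> x) + cnj (snd (\<phi> x)) * snd (\<phi> x)) = (\<lambda>x. of_real (h x))"
    by (simp only: fun_eq_iff h_def of_real_add complex_norm_square) (simp add: ac_simps)
  then have "L2inner a b \<phi> \<phi> = of_real (integral {a..b} h)"
    unfolding L2inner_def
    by (simp add: set_integral_complex_of_real set_borel_integral_eq_integral(2)[OF hi])
  then have "integral {a..b} h \<le> 0"
    using assms(3) unfolding L2norm_def by simp
  moreover have "integral {a..b} h \<ge> 0"
    using h_nonneg set_borel_integral_eq_integral(1)[OF hi] by (intro integral_nonneg) auto
  ultimately have "integral (cbox a b) h = 0" by simp
  then have "h x = 0"
    using integral_cbox_eq_0_iff[of a b h] hc h_nonneg assms(1,2) by simp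
  then show ?thesis
    unfolding h_def by (simp add: add_nonneg_eq_0_iff prod_eq_iff)
qed

lemma Dmax_rel_continuous_on:
  assumes "Dmax_rel a b m \<phi> \<psi>"
  shows "continuous_on {a..b} (\<lambda>x. fst (\<phi> x))" "continuous_on {a..b} (\<lambda>x. snd (\<phi> x))"
  using assms weak_deriv_continuous_on unfolding Dmax_rel_def by blast+

lemma Dmax_rel_diff:
  assumes "Dmax_rel a b m \<phi>1 \<psi>1" and "Dmax_rel a b m \<phi>2 \<psi>2"
  shows "Dmax_rel a b m (cdiff \<phi>1 \<phi>2) (cdiff \<psi>1 \<psi>2)"
proof -
  obtain g1 g2 where g: "weak_deriv a b (\<lambda>x. fst (\<phi>1 x)) g1" "weak_deriv a b (\<lambda>x. snd (\<phi>1 x)) g2"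
    and ae1: "AE x in lborel. x \<in> {a..b} \<longrightarrow>
        \<psi>1 x = (- \<i> * g2 x + of_real m * fst (\<phi>1 x), - \<i> * g1 x - of_real m * snd (\<phi>1 x))"
    using assms(1) unfolding Dmax_rel_def by blast
  obtain h1 h2 where h: "weak_deriv a b (\<lambda>x. fst (\<phi>2 x)) h1" "weak_deriv a b (\<lambda>x. snd (\<phi>2 x)) h2"
    and ae2: "AE x in lborel. x \<in> {a..b} \<longrightarrow>
        \<psi>2 x = (- \<i> * h2 x + of_real m * fst (\<phi>2 x), - \<i> * h1 x - of_real m * snd (\<phi>2 x))"
    using assms(2) unfolding Dmax_rel_def by blast
  have "L2vec a b (cdiff \<psi>1 \<psi>2)"
    using assms unfolding Dmax_rel_def L2vec_def cdiff_def by (auto intro: L2fun_diff)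
  moreover have "weak_deriv a b (\<lambda>x. fst (cdiff \<phi>1 \<phi>2 x)) (\<lambda>x. g1 x - h1 x)"
    "weak_deriv a b (\<lambda>x. snd (cdiff \<phi>1 \<phi>2 x)) (\<lambda>x. g2 x - h2 x)"
    unfolding cdiff_def fst_conv snd_conv using g h by (auto intro: weak_deriv_diff)
  moreover have "AE x in lborel. x \<in> {a..b} \<longrightarrow> cdiff \<psi>1 \<psi>2 x =
      (- \<i> * (g2 x - h2 x) + of_real m * fst (cdiff \<phi>1 \<phi>2 x),
       - \<i> * (g1 x - h1 x) - of_real m * snd (cdiff \<phi>1 \<phi>2 x))"
    using ae1 ae2 by eventually_elim (auto simp: cdiff_def algebra_simps)
  ultimately show ?thesis
    unfolding Dmax_rel_def by blast
qed

lemma cdiff_cscale: "cdiff (cscale z \<phi>1) (cscale z \<phi>2) = cscale z (cdiff \<phi>1 \<phi>2)"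
  by (simp add: fun_eq_iff cdiff_def cscale_def algebra_simps)

lemma resolvent_D0_eigenvector_eq_0:
  assumes z: "z \<in> resolvent_D0 a b m" and "a < b" and "x \<in> {a..b}"
    and eig: "Dmax_rel a b m \<delta> (cscale z \<delta>)" and "Gamma1 a b \<delta> = (0, 0)"
  shows "\<delta> x = (0, 0)"
proof (rule L2norm_le_0_imp_zero)
  obtain C where C: "\<And>\<phi> \<theta>. D0_rel a b m \<phi> \<theta> \<Longrightarrow>
      L2norm a b \<phi> \<le> C * L2norm a b (cdiff \<theta> (cscale z \<phi>))"
    using z unfolding resolvent_D0_def by blast
  have "L2norm a b \<delta> \<le> C * L2norm a b (cdiff (cscale z \<delta>) (cscale z \<delta>))"
    using C assms(4,5) unfolding D0_rel_def by blast
  also have "cdiff (cscale z \<delta>) (cscale z \<delta>) = (\<lambda>x. (0, 0))"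
    by (simp add: fun_eq_iff cdiff_def)
  finally show "L2norm a b \<delta> \<le> 0"
    by (simp add: L2norm_def L2inner_def)
qed (use assms Dmax_rel_continuous_on[OF eig] in auto)

section \<open>Explicit eigenfunctions of the maximal operator\<close>

lemma kfun_square: "(kfun m z)\<^sup>2 = z\<^sup>2 - (of_real m)\<^sup>2"
proof -
  define c where "c = z\<^sup>2 - (of_real m)\<^sup>2"
  let ?P = "\<lambda>w. w\<^sup>2 = c \<and> 0 \<le> Arg w \<and> Arg w < pi"
  have Arg_minus_cases: "0 \<le> Arg (- w) \<and> Arg (- w) < pi \<longleftrightarrow> \<not> (0 \<le> Arg w \<and> Arg w < pi)"
    if "w \<noteq> 0" for w
    using Arg_minus[OF that] Arg_bounded[of w] by auto
  have "\<exists>w. ?P w"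
  proof (cases "0 \<le> Arg (csqrt c) \<and> Arg (csqrt c) < pi")
    case True then show ?thesis by (intro exI[of _ "csqrt c"]) simp
  next
    case False
    then have "csqrt c \<noteq> 0" by (auto simp: Arg_zero)
    with False have "?P (- csqrt c)" using Arg_minus_cases by simp
    then show ?thesis ..
  qed
  moreover have "v = w" if "?P v" "?P w" for v w
  proof -
    have "(v - w) * (v + w) = 0" using that by (simp add: algebra_simps power2_eq_square)
    then have "v = w \<or> v = - w" by (auto simp: add_eq_0_iff)
    moreover have "v \<noteq> - w \<or> w = 0" using that Arg_minus_cases[of w] by auto
    ultimately show ?thesis by auto
  qed
  ultimately have "\<exists>!w. ?P w" by blast
  from theI'[OF this] show ?thesis unfolding kfun_def c_def by blast
qed

definition trig_eigenfun :: "real \<Rightarrow> real \<Rightarrow> complex \<Rightarrow> complex \<Rightarrow> complex \<Rightarrow> complex \<Rightarrow> cfun2" where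
  "trig_eigenfun a b k al c1 c2 = (\<lambda>x.
     (c1 * sin (k * of_real (b - x)) + c2 * sin (k * of_real (x - a)),
      (\<i> / al) * (c1 * cos (k * of_real (b - x)) - c2 * cos (k * of_real (x - a)))))"

lemma Dmax_rel_trig_eigenfun:
  assumes k2: "k\<^sup>2 = z\<^sup>2 - (of_real m)\<^sup>2" and k0: "k \<noteq> 0" and zm: "z + of_real m \<noteq> 0"
    and al: "al = (z + of_real m) / k"
  shows "Dmax_rel a b m (trig_eigenfun a b k al c1 c2) (cscale z (trig_eigenfun a b k al c1 c2))"
proof -
  define A B where "A = (of_real a :: complex)" and "B = (of_real b :: complex)"
  define P1 where "P1 w = c1 * sin (k * (B - w)) + c2 * sin (k * (w - A))" for w
  define P1' where "P1' w = - c1 * k * cos (k * (B - w)) + c2 * k * cos (k * (w - A))" for w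
  define P2 where "P2 w = (\<i> / al) * (c1 * cos (k * (B - w)) - c2 * cos (k * (w - A)))" for w
  define P2' where "P2' w = (\<i> / al) * (c1 * k * sin (k * (B - w)) + c2 * k * sin (k * (w - A)))" for w
  have al0: "al \<noteq> 0" using k0 zm al by simp
  have "(P1 has_field_derivative P1' w) (at w)" for w
    unfolding P1_def P1'_def by (rule derivative_eq_intros refl | simp)+
  moreover have "(P2 has_field_derivative P2' w) (at w)" for w
    unfolding P2_def P2'_def by (rule derivative_eq_intros refl | simp add: algebra_simps)+
  moreover have "(\<lambda>x. fst (trig_eigenfun a b k al c1 c2 x)) = (\<lambda>x. P1 (of_real x))"
    "(\<lambda>x. snd (trig_eigenfun a b k al c1 c2 x)) = (\<lambda>x. P2 (of_real x))"
    by (simp_all add: fun_eq_iff trig_eigenfun_def P1_def P2_def A_def B_def)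
  ultimately have deriv:
    "weak_deriv a b (\<lambda>x. fst (trig_eigenfun a b k al c1 c2 x)) (\<lambda>x. P1' (of_real x))"
    "weak_deriv a b (\<lambda>x. snd (trig_eigenfun a b k al c1 c2 x)) (\<lambda>x. P2' (of_real x))"
    by (auto intro!: weak_deriv_if_has_vector_derivative has_vector_derivative_real_field
        continuous_intros simp: P1'_def P2'_def al0)
  have L2: "L2vec a b (cscale z (trig_eigenfun a b k al c1 c2))"
    unfolding L2vec_def cscale_def trig_eigenfun_def fst_conv snd_conv
    by (intro conjI L2fun_continuous_on continuous_intros)
  \<comment> \<open>\<open>k / \<alpha> = z - m\<close> and \<open>k \<alpha> = z + m\<close> are the two halves of \<open>k\<^sup>2 = z\<^sup>2 - m\<^sup>2\<close>.\<close>
  have kal: "k / al = z - of_real m"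
  proof -
    have "k / al = k * k / (z + of_real m)" using k0 zm by (simp add: al field_simps)
    also have "k * k = (z - of_real m) * (z + of_real m)"
      using k2 by (simp add: power2_eq_square algebra_simps)
    finally show ?thesis using zm by simp
  qed
  have kal': "(z + of_real m) * (\<i> / al) = \<i> * k"
    using k0 zm by (simp add: al field_simps)
  have eq1: "z * P1 w = - \<i> * P2' w + of_real m * P1 w" for w
  proof -
    have "- \<i> * P2' w = (k / al) * P1 w"
      unfolding P2'_def P1_def by (simp add: algebra_simps)
    then show ?thesis unfolding kal by (simp add: algebra_simps)
  qed
  have eq2: "z * P2 w = - \<i> * P1' w - of_real m * P2 w" for w
  proof -
    have "(z + of_real m) * P2 w = \<i> * k * (c1 * cos (k * (B - w)) - c2 * cos (k * (w - A)))"
      unfolding P2_def by (simp only: mult.assoc[symmetric] kal')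
    then show ?thesis unfolding P1'_def by (simp add: algebra_simps)
  qed
  show ?thesis
    unfolding Dmax_rel_def using L2 deriv eq1 eq2
    by (intro conjI exI AE_I2) (auto simp: cscale_def trig_eigenfun_def P1_def P2_def A_def B_def)
qed

definition affine_eigenfun :: "real \<Rightarrow> real \<Rightarrow> real \<Rightarrow> complex \<Rightarrow> complex \<Rightarrow> cfun2" where
  "affine_eigenfun a b m c1 c2 =
     (\<lambda>x. (c1 * of_real (b - x) + c2 * of_real (x - a), \<i> * (c1 - c2) / (2 * of_real m)))"

lemma Dmax_rel_affine_eigenfun:
  assumes "m \<noteq> 0"
  shows "Dmax_rel a b m (affine_eigenfun a b m c1 c2) (cscale (of_real m) (affine_eigenfun a b m c1 c2))"
proof -
  have "((\<lambda>x. c1 * of_real (b - x) + c2 * of_real (x - a)) has_vector_derivative (c2 - c1)) (at x)"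
    for x :: real
    by (auto intro!: derivative_eq_intros simp: has_real_derivative_iff_has_vector_derivative[symmetric]
        algebra_simps)
  then have "weak_deriv a b (\<lambda>x. fst (affine_eigenfun a b m c1 c2 x)) (\<lambda>x. c2 - c1)"
    unfolding affine_eigenfun_def fst_conv by (intro weak_deriv_if_has_vector_derivative) auto
  moreover have "L2vec a b (cscale (of_real m) (affine_eigenfun a b m c1 c2))"
    unfolding L2vec_def cscale_def affine_eigenfun_def fst_conv snd_conv
    by (intro conjI L2fun_continuous_on continuous_intros)
  moreover have "of_real m * (\<i> * (c1 - c2) / (2 * of_real m)) =
      - \<i> * (c2 - c1) - of_real m * (\<i> * (c1 - c2) / (2 * of_real m))"
    using assms by (simp add: field_simps)
  ultimately show ?thesis
    unfolding Dmax_rel_def using weak_deriv_const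
    by (intro conjI exI AE_I2) (auto simp: cscale_def affine_eigenfun_def)
qed

lemma Dmax_rel_const_eigenfun:
  "Dmax_rel a b m (\<lambda>x. (0, 1)) (cscale (- of_real m) (\<lambda>x. (0, 1)))"
proof -
  have "L2vec a b (cscale (- of_real m) (\<lambda>x. (0, 1)))"
    unfolding L2vec_def cscale_def fst_conv snd_conv
    by (intro conjI L2fun_continuous_on continuous_intros)
  then show ?thesis
    unfolding Dmax_rel_def using weak_deriv_const
    by (intro conjI exI[of _ "\<lambda>x. 0"] AE_I2) (auto simp: cscale_def)
qed

section \<open>Points of the resolvent set\<close>

lemma neg_m_notin_resolvent_D0:
  assumes "a < b"
  shows "- of_real m \<notin> resolvent_D0 a b m"
proof
  assume z: "- of_real m \<in> resolvent_D0 a b m"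
  have "Gamma1 a b (\<lambda>x. (0, 1)) = (0, 0)"
    by (simp add: Gamma1_def)
  from resolvent_D0_eigenvector_eq_0[OF z assms _ Dmax_rel_const_eigenfun this, of a]
  show False using assms by simp
qed

lemma resolvent_D0_m_nonzero:
  assumes "of_real m \<in> resolvent_D0 a b m" and "a < b"
  shows "m \<noteq> 0"
proof
  assume "m = 0"
  then show False using assms neg_m_notin_resolvent_D0[of a b m] by simp
qed

lemma resolvent_D0_plus_m_nonzero:
  assumes "z \<in> resolvent_D0 a b m" and "a < b"
  shows "z + of_real m \<noteq> 0"
proof
  assume "z + of_real m = 0"
  then have "z = - of_real m" by (simp add: add_eq_0_iff)
  then show False using assms neg_m_notin_resolvent_D0[of a b m] by simp
qed

lemma resolvent_D0_kfun_nonzero: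
  assumes "z \<in> resolvent_D0 a b m" and "a < b" and "z \<noteq> of_real m"
  shows "kfun m z \<noteq> 0"
proof -
  have "(kfun m z)\<^sup>2 = (z - of_real m) * (z + of_real m)"
    using kfun_square[of m z] by (simp add: power2_eq_square algebra_simps)
  then show ?thesis
    using assms resolvent_D0_plus_m_nonzero by auto
qed

lemma resolvent_D0_alpha_nonzero:
  assumes "z \<in> resolvent_D0 a b m" and "a < b" and "z \<noteq> of_real m"
  shows "alpha m z \<noteq> 0"
  using resolvent_D0_kfun_nonzero[OF assms] resolvent_D0_plus_m_nonzero[OF assms(1,2)]
  by (simp add: alpha_def)

lemma resolvent_D0_sin_nonzero:
  assumes z: "z \<in> resolvent_D0 a b m" and ab: "a < b" and "z \<noteq> of_real m"
  shows "sin (kfun m z * of_real (b - a)) \<noteq> 0"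
proof
  assume sin0: "sin (kfun m z * of_real (b - a)) = 0"
  let ?\<phi> = "trig_eigenfun a b (kfun m z) (alpha m z) 0 1"
  have eig: "Dmax_rel a b m ?\<phi> (cscale z ?\<phi>)"
    using resolvent_D0_kfun_nonzero[OF assms] resolvent_D0_plus_m_nonzero[OF z ab]
    by (intro Dmax_rel_trig_eigenfun kfun_square) (auto simp: alpha_def)
  have "Gamma1 a b ?\<phi> = (0, 0)"
    using sin0 by (simp add: Gamma1_def trig_eigenfun_def)
  then have "?\<phi> a = (0, 0)"
    using resolvent_D0_eigenvector_eq_0[OF z ab _ eig] ab by simp
  then show False
    using resolvent_D0_alpha_nonzero[OF assms] by (simp add: trig_eigenfun_def)
qed

section \<open>The \<open>\<gamma>\<close>-field and its adjoint\<close>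

definition eta_comb :: "real \<Rightarrow> real \<Rightarrow> real \<Rightarrow> complex \<Rightarrow> complex \<times> complex \<Rightarrow> cfun2" where
  "eta_comb a b m z \<omega> = (\<lambda>x.
     (fst \<omega> * fst (eta1 a b m z x) + snd \<omega> * fst (eta2 a b m z x),
      fst \<omega> * snd (eta1 a b m z x) + snd \<omega> * snd (eta2 a b m z x)))"

lemma eta_comb_at_m:
  assumes "a < b" and "m \<noteq> 0"
  shows "eta_comb a b m (of_real m) \<omega> =
    affine_eigenfun a b m (fst \<omega> / of_real (b - a)) (snd \<omega> / of_real (b - a))"
proof -
  have "complex_of_real (b - a) \<noteq> 0" using assms(1) by simp
  with assms(2) show ?thesis
    unfolding eta_comb_def eta1_def eta2_def affine_eigenfun_def
    by (simp only: if_True of_real_divide fun_eq_iff prod_eq_iff fst_conv snd_conv)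
      (simp add: field_simps del: of_real_diff)
qed

lemma eta_comb_not_m:
  assumes "z \<noteq> of_real m" and "sin (kfun m z * of_real (b - a)) \<noteq> 0" and "alpha m z \<noteq> 0"
  shows "eta_comb a b m z \<omega> = trig_eigenfun a b (kfun m z) (alpha m z)
    (fst \<omega> / sin (kfun m z * of_real (b - a))) (snd \<omega> / sin (kfun m z * of_real (b - a)))"
proof -
  define s where "s = sin (kfun m z * of_real (b - a))"
  have "s \<noteq> 0" using assms(2) by (simp add: s_def)
  with assms(1,3) show ?thesis
    unfolding eta_comb_def eta1_def eta2_def trig_eigenfun_def s_def[symmetric]
    by (simp add: fun_eq_iff field_simps)
qed

lemma eta_comb_solves_boundary_problem:
  assumes z: "z \<in> resolvent_D0 a b m" and ab: "a < b"
  shows "Dmax_rel a b m (eta_comb a b m z \<omega>) (cscale z (eta_comb a b m z \<omega>))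
    \<and> Gamma1 a b (eta_comb a b m z \<omega>) = \<omega>"
proof (cases "z = of_real m")
  case True
  have m: "m \<noteq> 0" using resolvent_D0_m_nonzero z ab True by blast
  then have "Dmax_rel a b m (eta_comb a b m z \<omega>) (cscale z (eta_comb a b m z \<omega>))"
    unfolding True eta_comb_at_m[OF ab m] by (rule Dmax_rel_affine_eigenfun)
  moreover have "complex_of_real (b - a) \<noteq> 0" "complex_of_real b - complex_of_real a \<noteq> 0"
    using ab by auto
  then have "Gamma1 a b (eta_comb a b m z \<omega>) = \<omega>"
    unfolding True eta_comb_at_m[OF ab m] by (simp add: Gamma1_def affine_eigenfun_def)
  ultimately show ?thesis ..
next
  case False
  note sin = resolvent_D0_sin_nonzero[OF z ab False]
  note eta_comb_eq = eta_comb_not_m[OF False sin resolvent_D0_alpha_nonzero[OF z ab False]]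
  have "Dmax_rel a b m (eta_comb a b m z \<omega>) (cscale z (eta_comb a b m z \<omega>))"
    unfolding eta_comb_eq
    using resolvent_D0_kfun_nonzero[OF z ab False] resolvent_D0_plus_m_nonzero[OF z ab]
    by (intro Dmax_rel_trig_eigenfun kfun_square) (auto simp: alpha_def)
  moreover have "Gamma1 a b (eta_comb a b m z \<omega>) = \<omega>"
    unfolding eta_comb_eq using sin by (simp add: Gamma1_def trig_eigenfun_def)
  ultimately show ?thesis ..
qed

lemma gamma_field_eq_eta_comb:
  assumes z: "z \<in> resolvent_D0 a b m" and ab: "a < b" and x: "x \<in> {a..b}"
  shows "gamma_field a b m z \<omega> x = eta_comb a b m z \<omega> x"
proof -
  let ?P = "\<lambda>\<phi>. Dmax_rel a b m \<phi> (cscale z \<phi>) \<and> Gamma1 a b \<phi> = \<omega>"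
  let ?\<delta> = "cdiff (gamma_field a b m z \<omega>) (eta_comb a b m z \<omega>)"
  have sol: "?P (eta_comb a b m z \<omega>)"
    by (rule eta_comb_solves_boundary_problem[OF z ab])
  then have gamma: "?P (gamma_field a b m z \<omega>)"
    unfolding gamma_field_def by (rule someI[of ?P])
  have "Dmax_rel a b m ?\<delta> (cscale z ?\<delta>)"
    using Dmax_rel_diff[OF conjunct1[OF gamma] conjunct1[OF sol]] by (simp only: cdiff_cscale)
  moreover have "Gamma1 a b ?\<delta> = (0, 0)"
    using gamma sol by (auto simp: Gamma1_def cdiff_def prod_eq_iff)
  ultimately have "?\<delta> x = (0, 0)"
    by (rule resolvent_D0_eigenvector_eq_0[OF z ab x])
  then show ?thesis by (simp add: cdiff_def prod_eq_iff)
qed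

lemma eta_continuous_on:
  assumes "z \<in> resolvent_D0 a b m" and "a < b"
  shows "continuous_on {a..b} (\<lambda>x. fst (eta1 a b m z x))" "continuous_on {a..b} (\<lambda>x. snd (eta1 a b m z x))"
    "continuous_on {a..b} (\<lambda>x. fst (eta2 a b m z x))" "continuous_on {a..b} (\<lambda>x. snd (eta2 a b m z x))"
  using Dmax_rel_continuous_on[OF conjunct1[OF eta_comb_solves_boundary_problem[OF assms, of "(1, 0)"]]]
    Dmax_rel_continuous_on[OF conjunct1[OF eta_comb_solves_boundary_problem[OF assms, of "(0, 1)"]]]
  by (simp_all add: eta_comb_def)

lemma L2inner_gamma_field:
  assumes z: "z \<in> resolvent_D0 a b m" and ab: "a < b" and \<phi>: "L2vec a b \<phi>"
  shows "L2inner a b \<phi> (gamma_field a b m z \<omega>) =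
    fst \<omega> * L2inner a b \<phi> (eta1 a b m z) + snd \<omega> * L2inner a b \<phi> (eta2 a b m z)"
proof -
  define F1 where "F1 x = cnj (fst (\<phi> x)) * fst (eta1 a b m z x) + cnj (snd (\<phi> x)) * snd (eta1 a b m z x)" for x
  define F2 where "F2 x = cnj (fst (\<phi> x)) * fst (eta2 a b m z x) + cnj (snd (\<phi> x)) * snd (eta2 a b m z x)" for x
  have "set_integrable lborel {a..b} F1" "set_integrable lborel {a..b} F2"
    using \<phi> eta_continuous_on[OF z ab] unfolding F1_def F2_def L2vec_def
    by (auto intro!: set_integral_add(1) set_integrable_cnj_mult_continuous_on)
  moreover have "L2inner a b \<phi> (gamma_field a b m z \<omega>) =
      (LINT x:{a..b}|lborel. fst \<omega> * F1 x + snd \<omega> * F2 x)"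
    unfolding L2inner_def
    by (rule set_lebesgue_integral_cong)
      (auto simp: gamma_field_eq_eta_comb[OF z ab] eta_comb_def F1_def F2_def algebra_simps)
  ultimately show ?thesis
    unfolding L2inner_def F1_def F2_def by (simp add: set_integral_add(2))
qed

lemma C2inner_eq_imp_eq:
  assumes "\<And>\<omega>. C2inner v \<omega> = C2inner w \<omega>"
  shows "v = w"
  using assms[of "(1, 0)"] assms[of "(0, 1)"] by (simp add: C2inner_def prod_eq_iff)

lemma gamma_adj_eq:
  assumes z: "z \<in> resolvent_D0 a b m" and ab: "a < b" and \<phi>: "L2vec a b \<phi>"
  shows "gamma_adj a b m z \<phi> = (L2inner a b (eta1 a b m z) \<phi>, L2inner a b (eta2 a b m z) \<phi>)"
proof (rule C2inner_eq_imp_eq)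
  let ?P = "\<lambda>v. \<forall>\<omega>. C2inner v \<omega> = L2inner a b \<phi> (gamma_field a b m z \<omega>)"
  have sol: "?P (L2inner a b (eta1 a b m z) \<phi>, L2inner a b (eta2 a b m z) \<phi>)"
    by (simp add: C2inner_def L2inner_gamma_field[OF z ab \<phi>] L2inner_swap[of a b _ \<phi>] ac_simps)
  then have adj: "?P (gamma_adj a b m z \<phi>)"
    unfolding gamma_adj_def by (rule someI[of ?P])
  show "C2inner (gamma_adj a b m z \<phi>) \<omega> =
      C2inner (L2inner a b (eta1 a b m z) \<phi>, L2inner a b (eta2 a b m z) \<phi>) \<omega>" for \<omega>
    using spec[OF adj, of \<omega>] spec[OF sol, of \<omega>] by simp
qed

lemma Qfun_eq_eta_comb:
  assumes "z \<in> resolvent_D0 a b m" and "a < b"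
  shows "Qfun a b m z \<omega> = (\<i> * snd (eta_comb a b m z \<omega> a), - \<i> * snd (eta_comb a b m z \<omega> b))"
  using assms by (simp add: Qfun_def Gamma2_def gamma_field_eq_eta_comb)

lemma Qfun_not_m:
  assumes z: "z \<in> resolvent_D0 a b m" and ab: "a < b" and zm: "z \<noteq> of_real m"
  shows "Qfun a b m z \<omega> =
    (let c = cos (kfun m z * of_real (b - a));
         s = - 1 / (alpha m z * sin (kfun m z * of_real (b - a)))
     in (s * (c * fst \<omega> - snd \<omega>), s * (- fst \<omega> + c * snd \<omega>)))"
  using zm resolvent_D0_sin_nonzero[OF assms] resolvent_D0_alpha_nonzero[OF assms]
  unfolding Qfun_eq_eta_comb[OF z ab] eta_comb_def eta1_def eta2_def Let_def
  by (simp add: field_simps del: of_real_diff)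

lemma Qfun_at_m:
  assumes "of_real m \<in> resolvent_D0 a b m" and ab: "a < b"
  shows "Qfun a b m (of_real m) \<omega> =
    (let s = - 1 / (2 * of_real m * of_real (b - a)) :: complex
     in (s * (fst \<omega> - snd \<omega>), s * (- fst \<omega> + snd \<omega>)))"
  using resolvent_D0_m_nonzero[OF assms] ab
  unfolding Qfun_eq_eta_comb[OF assms] eta_comb_at_m[OF ab resolvent_D0_m_nonzero[OF assms]]
    affine_eigenfun_def Let_def
  by (simp add: field_simps del: of_real_diff)

theorem proposition3p6:
  fixes a b m :: real
  assumes "a < b" and "0 \<le> m"
  shows
    "(\<forall>z \<in> resolvent_D0 a b m. \<forall>\<omega>. \<forall>x \<in> {a..b}.
        gamma_field a b m z \<omega> x =
          (fst \<omega> * fst (eta1 a b m z x) + snd \<omega> * fst (eta2 a b m z x),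
           fst \<omega> * snd (eta1 a b m z x) + snd \<omega> * snd (eta2 a b m z x)))
   \<and> (\<forall>z \<in> resolvent_D0 a b m. \<forall>\<phi>. L2vec a b \<phi> \<longrightarrow>
        gamma_adj a b m z \<phi> = (L2inner a b (eta1 a b m z) \<phi>, L2inner a b (eta2 a b m z) \<phi>))
   \<and> (\<forall>z \<in> resolvent_D0 a b m - {of_real m}. \<forall>\<omega>.
        Qfun a b m z \<omega> =
          (let c = cos (kfun m z * of_real (b - a));
               s = - 1 / (alpha m z * sin (kfun m z * of_real (b - a)))
           in (s * (c * fst \<omega> - snd \<omega>), s * (- fst \<omega> + c * snd \<omega>))))
   \<and> (of_real m \<in> resolvent_D0 a b m \<longrightarrow> (\<forall>\<omega>.
        Qfun a b m (of_real m) \<omega> =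
          (let s = - 1 / (2 * of_real m * of_real (b - a)) :: complex
           in (s * (fst \<omega> - snd \<omega>), s * (- fst \<omega> + snd \<omega>)))))"
  \<comment> \<open>\<open>0 \<le> m\<close> is not needed: the case \<open>m = 0\<close> of the last claim is vacuous, since then \<open>m = -m \<notin> \<rho>(D\<^sup>0)\<close>.\<close>
  using gamma_field_eq_eta_comb[OF _ assms(1)] gamma_adj_eq[OF _ assms(1)]
    Qfun_not_m[OF _ assms(1)] Qfun_at_m[OF _ assms(1)]
  by (auto simp: eta_comb_def)

end
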